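(* Let $\varepsilon\in[0,1/6]$ and let $\alpha,\beta,\gamma\in\mathbb{C}$ satisfy $|\alpha|,|\beta|,|\gamma|\in[1-\varepsilon,1]$ and $|\alpha+\beta+\gamma|\le\varepsilon$. Then for each angle $\theta\in\{\arg(\alpha)-\arg(\beta),\ \arg(\beta)-\arg(\gamma),\ \arg(\gamma)-\arg(\alpha)\}$, interpreted (modulo $2\pi$) as an element of $[0,2\pi)$, one has $|\theta-2\pi/3|\le6\varepsilon$ or $|\theta-4\pi/3|\le6\varepsilon$. *)

theory Defs
  imports "HOL-Analysis.Analysis"
begin

definition angle_mod :: "real \<Rightarrow> real" where
  "angle_mod x = x - 2 * pi * of_int \<lfloor>x / (2 * pi)\<rfloor>"

end

theory Submission
  imports Defs
begin

text \<open>If \<open>u + v + w\<close> is small then \<open>|u + v|\<close> is within \<open>\<epsilon>\<close> of \<open>|w|\<close>, so it lies in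
  \<open>[1 - 2\<epsilon>, 1 + \<epsilon>]\<close>. The law of cosines
  \<open>|u + v|\<^sup>2 = |u|\<^sup>2 + |v|\<^sup>2 + 2|u||v| cos (arg u - arg v)\<close> then confines the cosine to
  \<open>[-1/2 - 2\<epsilon>, -1/2 + 3\<epsilon>]\<close>. Since \<open>cos\<close> has slope \<open>-\<surd>3/2\<close> at \<open>2\<pi>/3\<close>, steeper
  than \<open>1/2\<close> in absolute value, the angle is within \<open>6\<epsilon>\<close> of \<open>2\<pi>/3\<close> or of its reflection
  \<open>4\<pi>/3\<close>.\<close>

lemma cos_ge_one_minus_sq_half: "1 - t\<^sup>2 / 2 \<le> cos (t::real)"
proof -
  have "(sin (t/2))\<^sup>2 \<le> (t/2)\<^sup>2"
    using abs_sin_x_le_abs_x[of "t/2"] by (metis abs_ge_zero power2_abs power_mono)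
  with cos_double_sin[of "t/2"] show ?thesis
    by (simp add: power_divide)
qed

lemma sin_ge_cubic:
  assumes "0 \<le> t"
  shows "t - t^3 / 6 \<le> sin (t::real)"
proof -
  have "\<bar>sin t - (\<Sum>m<3. sin_coeff m * t ^ m)\<bar> \<le> inverse (fact 3) * \<bar>t\<bar> ^ 3"
    by (rule Maclaurin_sin_bound)
  moreover have "(\<Sum>m<3. sin_coeff m * t ^ m) = t"
    by (simp add: numeral_3_eq_3 sin_coeff_def)
  moreover have "(fact 3 :: real) = 6"
    by (simp add: numeral_3_eq_3)
  ultimately have "\<bar>sin t - t\<bar> \<le> t^3 / 6"
    using assms by simp
  then show ?thesis
    by linarith
qed

lemma sqrt_three_ge: "1.7 \<le> sqrt (3::real)"
  by (rule real_le_rsqrt) (simp add: power2_eq_square)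

lemma cos_two_pi_third_minus_ge:
  assumes "0 \<le> t" "t \<le> 1"
  shows "-1/2 + t/2 \<le> cos (2*pi/3 - t)"
proof -
  have "t^3 \<le> t"
    using assms power_decreasing[of 1 3 t] by simp
  with sin_ge_cubic[OF assms(1)] have "5/6 * t \<le> sin t"
    by linarith
  then have "1.7/2 * (5/6 * t) \<le> sqrt 3 / 2 * sin t"
    using assms sqrt_three_ge by (intro mult_mono) auto
  moreover have "cos (2*pi/3 - t) = -1/2 * cos t + sqrt 3 / 2 * sin t"
    by (simp add: cos_diff cos_120 sin_120)
  ultimately show ?thesis
    using assms cos_le_one[of t] by linarith
qed

lemma cos_two_pi_third_plus_le:
  assumes "0 \<le> t" "t \<le> 1"
  shows "cos (2*pi/3 + t) \<le> -1/2 - t/3"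
proof -
  have t2: "t\<^sup>2 \<le> t" and t3: "t^3 \<le> t"
    using assms power_decreasing[of 1 2 t] power_decreasing[of 1 3 t] by simp_all
  have "1.7/2 * (t - t^3/6) \<le> sqrt 3 / 2 * sin t"
    using assms t3 sin_ge_cubic[OF assms(1)] sqrt_three_ge by (intro mult_mono) auto
  moreover have "cos (2*pi/3 + t) = -1/2 * cos t - sqrt 3 / 2 * sin t"
    by (simp add: cos_add cos_120 sin_120)
  moreover have "t\<^sup>2/4 + 17/120 * t^3 \<le> 31/60 * t"
    using t2 t3 assms by linarith
  ultimately show ?thesis
    using cos_ge_one_minus_sq_half[of t] by (simp add: algebra_simps)
qed

lemma abs_diff_two_pi_third_le_if_cos_near:
  assumes "0 \<le> \<theta>" "\<theta> \<le> pi" "0 \<le> t" "t \<le> 1"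
    and "-1/2 - t/3 \<le> cos \<theta>" "cos \<theta> \<le> -1/2 + t/2"
  shows "\<bar>\<theta> - 2*pi/3\<bar> \<le> t"
proof -
  have "3 < pi" by (rule pi_gt3)
  have "2*pi/3 - t \<le> \<theta>"
  proof (rule ccontr)
    assume "\<not> ?thesis"
    then have "cos (2*pi/3 - t) < cos \<theta>"
      using assms \<open>3 < pi\<close> by (intro cos_monotone_0_pi) auto
    with cos_two_pi_third_minus_ge[OF assms(3,4)] assms(6) show False
      by linarith
  qed
  moreover have "\<theta> \<le> 2*pi/3 + t"
  proof (rule ccontr)
    assume "\<not> ?thesis"
    then have "cos \<theta> < cos (2*pi/3 + t)"
      using assms \<open>3 < pi\<close> by (intro cos_monotone_0_pi) auto
    with cos_two_pi_third_plus_le[OF assms(3,4)] assms(5) show False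
      by linarith
  qed
  ultimately show ?thesis
    by linarith
qed

lemma angle_mod_nonneg: "0 \<le> angle_mod x"
  and angle_mod_less_two_pi: "angle_mod x < 2 * pi"
proof -
  define k where "k = \<lfloor>x / (2*pi)\<rfloor>"
  have "of_int k \<le> x / (2*pi)" "x / (2*pi) < of_int k + 1"
    unfolding k_def by linarith+
  then have "2*pi * of_int k \<le> x" "x < 2*pi * of_int k + 2*pi"
    by (simp_all add: field_simps)
  then show "0 \<le> angle_mod x" "angle_mod x < 2 * pi"
    unfolding angle_mod_def k_def by simp_all
qed

lemma cos_angle_mod [simp]: "cos (angle_mod x) = cos x"
  unfolding angle_mod_def by (simp add: cos_diff)

lemma angle_mod_near_thirds_if_cos_near:
  assumes "0 \<le> t" "t \<le> 1"
    and "-1/2 - t/3 \<le> cos x" "cos x \<le> -1/2 + t/2"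
  shows "\<bar>angle_mod x - 2*pi/3\<bar> \<le> t \<or> \<bar>angle_mod x - 4*pi/3\<bar> \<le> t"
proof (cases "angle_mod x \<le> pi")
  case True
  then show ?thesis
    using assms angle_mod_nonneg
    by (intro disjI1 abs_diff_two_pi_third_le_if_cos_near) auto
next
  case False
  have "\<bar>(2*pi - angle_mod x) - 2*pi/3\<bar> \<le> t"
    using False assms angle_mod_less_two_pi[of x]
    by (intro abs_diff_two_pi_third_le_if_cos_near) auto
  then show ?thesis
    by linarith
qed

lemma Re_mult_cnj_eq_norm_cos_Arg:
  "Re (u * cnj v) = cmod u * cmod v * cos (Arg u - Arg v)"
proof -
  have "u * cnj v = rcis (cmod u) (Arg u) * cnj (rcis (cmod v) (Arg v))"
    by (simp add: rcis_cmod_Arg)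
  also have "\<dots> = rcis (cmod u * cmod v) (Arg u - Arg v)"
    by (simp add: rcis_def cis_cnj cis_mult)
  finally show ?thesis
    by simp
qed

lemma norm_add_squared:
  "(cmod (u + v))\<^sup>2 = (cmod u)\<^sup>2 + (cmod v)\<^sup>2 + 2 * Re (u * cnj v)"
  unfolding cmod_power2 by (simp add: power2_eq_square algebra_simps)

lemma cos_near_minus_half_if_law_of_cosines:
  fixes a b s c e :: real
  assumes "0 \<le> e" "e \<le> 1/6"
    and "1 - e \<le> a" "a \<le> 1" "1 - e \<le> b" "b \<le> 1"
    and "1 - 2*e \<le> s" "s \<le> 1 + e"
    and law: "s\<^sup>2 = a\<^sup>2 + b\<^sup>2 + 2 * (a * b) * c"
  shows "-1/2 - 2*e \<le> c" "c \<le> -1/2 + 3*e"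
proof -
  define p where "p = a * b"
  have p_lower: "(1 - e)\<^sup>2 \<le> p" and p_upper: "p \<le> 1"
    using assms unfolding p_def power2_eq_square by (auto intro: mult_mono mult_le_one)
  moreover have "0 < (1 - e)\<^sup>2"
    using assms by simp
  ultimately have "0 < p"
    by linarith
  have "\<bar>a - b\<bar> \<le> e"
    using assms by linarith
  then have "(a - b)\<^sup>2 \<le> e\<^sup>2"
    by (metis abs_ge_zero power2_abs power_mono)
  moreover have "a\<^sup>2 + b\<^sup>2 = (a - b)\<^sup>2 + 2 * p"
    by (simp add: p_def power2_eq_square algebra_simps)
  moreover have "(1 - 2*e)\<^sup>2 \<le> s\<^sup>2" "s\<^sup>2 \<le> (1 + e)\<^sup>2"
    using assms(1,2,7,8) by (auto intro: power_mono)
  moreover have "s\<^sup>2 = a\<^sup>2 + b\<^sup>2 + 2*p*c"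
    using law by (simp add: p_def)
  ultimately have lower: "(1 - 2*e)\<^sup>2 - e\<^sup>2 - 2*p \<le> 2*p*c" and upper: "2*p*c \<le> (1 + e)\<^sup>2 - 2*p"
    using zero_le_power2[of "a - b"] by linarith+
  have "p * (-1/2 - 2*e) \<le> p * c"
  proof -
    have "(1 - 4*e) * p \<le> 1 - 4*e"
      using p_upper assms by (simp add: mult_left_le)
    then show ?thesis
      using lower zero_le_power2[of e]
      by (simp add: power2_eq_square algebra_simps del: zero_le_square)
  qed
  moreover have "p * c \<le> p * (-1/2 + 3*e)"
  proof -
    have "(1 + 6*e) * (1 - e)\<^sup>2 - (1 + e)\<^sup>2 = 2*e*(1 - 6*e) + 6*e^3"
      by (simp add: power2_eq_square power3_eq_cube algebra_simps)
    moreover have "0 \<le> 2*e*(1 - 6*e) + 6*e^3"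
      using assms(1,2) by simp
    ultimately have "(1 + e)\<^sup>2 \<le> (1 + 6*e) * (1 - e)\<^sup>2"
      by linarith
    also have "\<dots> \<le> (1 + 6*e) * p"
      using p_lower assms by (simp add: mult_left_mono)
    finally show ?thesis
      using upper by (simp add: algebra_simps)
  qed
  ultimately show "-1/2 - 2*e \<le> c" "c \<le> -1/2 + 3*e"
    using \<open>0 < p\<close> by simp_all
qed

lemma cos_Arg_diff_near_minus_half:
  fixes e :: real and u v w :: complex
  assumes "0 \<le> e" "e \<le> 1/6"
    and "1 - e \<le> cmod u" "cmod u \<le> 1"
    and "1 - e \<le> cmod v" "cmod v \<le> 1"
    and "1 - e \<le> cmod w" "cmod w \<le> 1"
    and "cmod (u + v + w) \<le> e"
  shows "-1/2 - 2*e \<le> cos (Arg u - Arg v) \<and> cos (Arg u - Arg v) \<le> -1/2 + 3*e"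
proof -
  have "cmod (u + v) \<le> cmod (u + v + w) + cmod w"
    using norm_triangle_ineq4[of "u + v + w" w] by simp
  moreover have "cmod w \<le> cmod (u + v + w) + cmod (u + v)"
    using norm_triangle_ineq4[of "u + v + w" "u + v"] by simp
  moreover have "(cmod (u + v))\<^sup>2
      = (cmod u)\<^sup>2 + (cmod v)\<^sup>2 + 2 * (cmod u * cmod v) * cos (Arg u - Arg v)"
    unfolding norm_add_squared Re_mult_cnj_eq_norm_cos_Arg by (simp only: mult.assoc)
  ultimately show ?thesis
    using cos_near_minus_half_if_law_of_cosines[of e "cmod u" "cmod v" "cmod (u + v)"] assms
    by auto
qed

theorem lemma3:
  fixes \<epsilon> :: real and \<alpha> \<beta> \<gamma> :: complex
  assumes "0 \<le> \<epsilon>" and "\<epsilon> \<le> 1/6"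
    and "1 - \<epsilon> \<le> cmod \<alpha>" and "cmod \<alpha> \<le> 1"
    and "1 - \<epsilon> \<le> cmod \<beta>" and "cmod \<beta> \<le> 1"
    and "1 - \<epsilon> \<le> cmod \<gamma>" and "cmod \<gamma> \<le> 1"
    and "cmod (\<alpha> + \<beta> + \<gamma>) \<le> \<epsilon>"
  shows "\<forall>\<theta> \<in> {angle_mod (Arg \<alpha> - Arg \<beta>), angle_mod (Arg \<beta> - Arg \<gamma>),
                  angle_mod (Arg \<gamma> - Arg \<alpha>)}.
           \<bar>\<theta> - 2 * pi / 3\<bar> \<le> 6 * \<epsilon> \<or> \<bar>\<theta> - 4 * pi / 3\<bar> \<le> 6 * \<epsilon>"
proof -
  have "-1/2 - 2*\<epsilon> \<le> cos (Arg \<alpha> - Arg \<beta>) \<and> cos (Arg \<alpha> - Arg \<beta>) \<le> -1/2 + 3*\<epsilon>"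
    "-1/2 - 2*\<epsilon> \<le> cos (Arg \<beta> - Arg \<gamma>) \<and> cos (Arg \<beta> - Arg \<gamma>) \<le> -1/2 + 3*\<epsilon>"
    "-1/2 - 2*\<epsilon> \<le> cos (Arg \<gamma> - Arg \<alpha>) \<and> cos (Arg \<gamma> - Arg \<alpha>) \<le> -1/2 + 3*\<epsilon>"
    using cos_Arg_diff_near_minus_half[OF assms(1-9)]
      cos_Arg_diff_near_minus_half[OF assms(1,2,5-8,3,4)]
      cos_Arg_diff_near_minus_half[OF assms(1,2,7,8,3-6)] assms(9)
    by (simp_all add: add_ac)
  moreover have "\<bar>angle_mod x - 2*pi/3\<bar> \<le> 6*\<epsilon> \<or> \<bar>angle_mod x - 4*pi/3\<bar> \<le> 6*\<epsilon>"
    if "-1/2 - 2*\<epsilon> \<le> cos x \<and> cos x \<le> -1/2 + 3*\<epsilon>" for x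
    using that assms(1,2) by (intro angle_mod_near_thirds_if_cos_near) auto
  ultimately show ?thesis
    by simp
qed

end
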